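(* If $n\ge2$ and $q$ is a nonnegative integer with $q<\frac{n}{\log(n+1)+1}-1$, then $(1-1/e)(q+1)^n\le A(n,q)\le(q+1)^n$.
   Context: $A(n,q)$ is the Eulerian number, the number of permutations of $\{1,\dots,n\}$ with exactly $q$ ascents, with $A(n,q)=0$ if $q\ge n$; $\log$ is the natural logarithm. *)

theory Defs
  imports "HOL-Analysis.Analysis" "HOL-Combinatorics.Permutations"
begin

definition ascents :: "nat \<Rightarrow> (nat \<Rightarrow> nat) \<Rightarrow> nat set" where
  "ascents n \<sigma> = {i \<in> {1..<n}. \<sigma> i < \<sigma> (Suc i)}"

definition eulerian :: "nat \<Rightarrow> nat \<Rightarrow> nat" where
  "eulerian n q = card {\<sigma>. \<sigma> permutes {1..n} \<and> card (ascents n \<sigma>) = q}"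

end

theory Submission
  imports Defs "HOL-Combinatorics.Multiset_Permutations"
begin

(* Worpitzky's identity (q+1)^n = (SUM j<=q. A(n,j) * ((q+n-j) choose n)) gives the upper bound
   from its term j = q. For the lower bound, the remaining terms are compared one by one with
   those of Worpitzky's identity for q-1: since ((q+n-j) choose n) <= (n+1) * ((q-1+n-j) choose n),
   we get (q+1)^n - A(n,q) <= (n+1) q^n, and the hypothesis on q is what makes
   (n+1) q^n <= (q+1)^n / e, because ln (1 + 1/q) >= 1/(q+1).
   Worpitzky's identity follows by induction on n from the recurrence
   A(n+1,q) = (q+1) A(n,q) + (n+1-q) A(n,q-1), which counts the positions at which n+1 can be
   inserted into a permutation of {1..n} so that the result has q ascents. *)

lemma Collect_nat_split_0_Suc: "{i. P i} = {i. i = 0 \<and> P 0} \<union> Suc ` {i. P (Suc i)}"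
proof (intro set_eqI iffI)
  fix i assume "i \<in> {i. P i}"
  then show "i \<in> {i. i = 0 \<and> P 0} \<union> Suc ` {i. P (Suc i)}" by (cases i) auto
qed auto

definition insert_at :: "nat \<Rightarrow> 'a \<Rightarrow> 'a list \<Rightarrow> 'a list" where
  "insert_at k x xs = take k xs @ x # drop k xs"

lemma set_insert_at [simp]: "set (insert_at k x xs) = insert x (set xs)"
  using set_append[of "take k xs" "drop k xs"] by (simp add: insert_at_def)

lemma distinct_insert_at [simp]: "distinct (insert_at k x xs) \<longleftrightarrow> x \<notin> set xs \<and> distinct xs"
proof -
  have "distinct (take k xs @ drop k xs) \<longleftrightarrow> distinct xs"
    "set (take k xs) \<union> set (drop k xs) = set xs"
    by (simp_all flip: set_append)
  then show ?thesis
    unfolding insert_at_def distinct_append by auto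
qed

lemma insert_at_eq_iff:
  assumes "x \<notin> set xs" "x \<notin> set ys" "k \<le> length xs" "l \<le> length ys"
  shows "insert_at k x xs = insert_at l x ys \<longleftrightarrow> xs = ys \<and> k = l"
proof
  assume eq: "insert_at k x xs = insert_at l x ys"
  have "x \<notin> set (take k xs)" "x \<notin> set (drop k xs)" "x \<notin> set (take l ys)"
    using assms by (meson in_set_takeD in_set_dropD)+
  then have "take k xs = take l ys" "drop k xs = drop l ys"
    using eq append_Cons_eq_iff unfolding insert_at_def by metis+
  then show "xs = ys \<and> k = l"
    using assms(3,4) by (metis append_take_drop_id length_take min.absorb2)
qed simp

lemma bij_betw_insert_at_permutations_of_set:
  assumes "x \<notin> A"
  shows "bij_betw (\<lambda>(xs, k). insert_at k x xs) (SIGMA xs:permutations_of_set A. {..length xs})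
           (permutations_of_set (insert x A))"
proof -
  let ?f = "\<lambda>(xs, k). insert_at k x xs"
  let ?S = "SIGMA xs:permutations_of_set A. {..length xs}"
  have "inj_on ?f ?S"
  proof (rule inj_onI)
    fix p p' assume p: "p \<in> ?S" "p' \<in> ?S" "?f p = ?f p'"
    obtain xs k xs' k' where [simp]: "p = (xs, k)" "p' = (xs', k')"
      by (cases p, cases p')
    from p have "k \<le> length xs" "k' \<le> length xs'" "insert_at k x xs = insert_at k' x xs'"
      by auto
    moreover from p assms have "x \<notin> set xs" "x \<notin> set xs'"
      by (auto dest: permutations_of_setD)
    ultimately show "p = p'"
      by (simp add: insert_at_eq_iff)
  qed
  moreover have "?f ` ?S \<subseteq> permutations_of_set (insert x A)"
    using assms by (auto intro!: permutations_of_setI dest: permutations_of_setD)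
  moreover have "permutations_of_set (insert x A) \<subseteq> ?f ` ?S"
  proof
    fix ys assume ys: "ys \<in> permutations_of_set (insert x A)"
    then obtain us vs where split: "ys = us @ x # vs"
      by (metis insertI1 permutations_of_setD(1) split_list)
    have "us @ vs \<in> permutations_of_set A"
      using ys assms unfolding split permutations_of_set_def by auto
    moreover have "ys = insert_at (length us) x (us @ vs)"
      by (simp add: split insert_at_def)
    ultimately show "ys \<in> ?f ` ?S"
      by (intro image_eqI[of _ _ "(us @ vs, length us)"]) auto
  qed
  ultimately show ?thesis
    unfolding bij_betw_def by blast
qed

fun num_ascents :: "'a::linorder list \<Rightarrow> nat" where
  "num_ascents (x # y # zs) = (if x < y then 1 else 0) + num_ascents (y # zs)"
| "num_ascents _ = 0"

lemma num_ascents_Cons: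
  "num_ascents (x # xs) = (if xs \<noteq> [] \<and> x < hd xs then 1 else 0) + num_ascents xs"
  by (cases xs) auto

lemma num_ascents_conv_card:
  "num_ascents xs = card {i. Suc i < length xs \<and> xs ! i < xs ! Suc i}"
proof (induction xs rule: num_ascents.induct)
  case (1 x y zs)
  have "{i. Suc i < length (x # y # zs) \<and> (x # y # zs) ! i < (x # y # zs) ! Suc i}
      = {i. i = 0 \<and> x < y} \<union> Suc ` {i. Suc i < length (y # zs) \<and> (y # zs) ! i < (y # zs) ! Suc i}"
    by (subst Collect_nat_split_0_Suc) simp
  then show ?case using 1 by (auto simp: card_image)
qed auto

(* A new maximum put into slot k, between xs ! (k - 1) and xs ! k, is preceded by an ascent and
   followed by a descent, so the number of ascents grows by one exactly when that slot held a
   descent or is the end of a nonempty list. *)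
definition ascent_gain :: "nat \<Rightarrow> 'a::linorder list \<Rightarrow> nat" where
  "ascent_gain k xs =
     (if k = 0 then 0 else if k = length xs then 1 else if xs ! (k - 1) < xs ! k then 0 else 1)"

lemma ascent_gain_0 [simp]: "ascent_gain 0 xs = 0"
  by (simp add: ascent_gain_def)

lemma ascent_gain_Suc_eq_0_iff:
  "ascent_gain (Suc i) xs = 0 \<longleftrightarrow> Suc i \<noteq> length xs \<and> xs ! i < xs ! Suc i"
  by (simp add: ascent_gain_def)

lemma num_ascents_insert_at_max:
  assumes "\<forall>y\<in>set xs. y < x" and "k \<le> length xs"
  shows "num_ascents (insert_at k x xs) = num_ascents xs + ascent_gain k xs"
  using assms
proof (induction xs arbitrary: k)
  case Nil
  then show ?case by (simp add: insert_at_def ascent_gain_def)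
next
  case (Cons a xs)
  show ?case
  proof (cases k)
    case 0
    then show ?thesis using Cons.prems by (simp add: insert_at_def ascent_gain_def less_not_sym)
  next
    case (Suc k')
    have IH: "num_ascents (insert_at k' x xs) = num_ascents xs + ascent_gain k' xs"
      using Cons Suc by auto
    have "insert_at k x (a # xs) = a # insert_at k' x xs"
      by (simp add: Suc insert_at_def)
    then show ?thesis
      using IH Cons.prems unfolding num_ascents_Cons[of a]
      by (cases xs; cases k'; auto simp: insert_at_def ascent_gain_def Suc hd_conv_nth nth_append)
  qed
qed

lemma card_ascent_gain_eq_0:
  "card {k. k \<le> length xs \<and> ascent_gain k xs = 0} = num_ascents xs + 1"
proof -
  have "{k. k \<le> length xs \<and> ascent_gain k xs = 0}
      = insert 0 (Suc ` {i. Suc i < length xs \<and> xs ! i < xs ! Suc i})"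
    by (subst Collect_nat_split_0_Suc) (auto simp: ascent_gain_Suc_eq_0_iff)
  moreover have "finite {i. Suc i < length xs \<and> xs ! i < xs ! Suc i}"
    by (rule finite_subset[of _ "{..<length xs}"]) auto
  ultimately show ?thesis by (simp add: card_image num_ascents_conv_card)
qed

lemma card_ascent_gain_eq_1:
  "card {k. k \<le> length xs \<and> ascent_gain k xs = 1} = length xs - num_ascents xs"
proof -
  have "{..length xs} = {k. k \<le> length xs \<and> ascent_gain k xs = 0} \<union> {k. k \<le> length xs \<and> ascent_gain k xs = 1}"
    by (auto simp: ascent_gain_def)
  then have "card {..length xs} =
      card {k. k \<le> length xs \<and> ascent_gain k xs = 0} + card {k. k \<le> length xs \<and> ascent_gain k xs = 1}"
    by (simp add: card_Un_disjoint[symmetric] disjoint_iff)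
  then show ?thesis using card_ascent_gain_eq_0[of xs] by simp
qed

lemma card_insertion_slots:
  "card {k. k \<le> length xs \<and> num_ascents xs + ascent_gain k xs = q} =
     (if num_ascents xs = q then q + 1 else 0) +
     (if num_ascents xs + 1 = q then length xs + 1 - q else 0)"
proof -
  have gain: "ascent_gain k xs = 0 \<or> ascent_gain k xs = 1" for k
    by (simp add: ascent_gain_def)
  consider "num_ascents xs = q" | "num_ascents xs + 1 = q" | "q \<noteq> num_ascents xs" "q \<noteq> num_ascents xs + 1"
    by blast
  then show ?thesis
  proof cases
    case 1
    then have "{k. k \<le> length xs \<and> num_ascents xs + ascent_gain k xs = q} =
        {k. k \<le> length xs \<and> ascent_gain k xs = 0}"
      by auto
    then show ?thesis using 1 card_ascent_gain_eq_0[of xs] by simp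
  next
    case 2
    then have "{k. k \<le> length xs \<and> num_ascents xs + ascent_gain k xs = q} =
        {k. k \<le> length xs \<and> ascent_gain k xs = 1}"
      by auto
    then show ?thesis using 2 card_ascent_gain_eq_1[of xs] by simp
  next
    case 3
    then have "{k. k \<le> length xs \<and> num_ascents xs + ascent_gain k xs = q} = {}"
      using gain by force
    then show ?thesis using 3 by simp
  qed
qed

lemma bij_betw_map_permutes:
  assumes "distinct xs"
  shows "bij_betw (\<lambda>\<sigma>. map \<sigma> xs) {\<sigma>. \<sigma> permutes set xs} (permutations_of_set (set xs))"
proof -
  have inj: "inj_on (\<lambda>\<sigma>. map \<sigma> xs) {\<sigma>. \<sigma> permutes set xs}"
  proof (rule inj_onI, rule ext)
    fix \<sigma> \<tau> y
    assume "\<sigma> \<in> {\<sigma>. \<sigma> permutes set xs}" "\<tau> \<in> {\<sigma>. \<sigma> permutes set xs}" "map \<sigma> xs = map \<tau> xs"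
    then show "\<sigma> y = \<tau> y"
      by (cases "y \<in> set xs") (auto simp: map_eq_conv permutes_not_in)
  qed
  moreover have "(\<lambda>\<sigma>. map \<sigma> xs) ` {\<sigma>. \<sigma> permutes set xs} \<subseteq> permutations_of_set (set xs)"
  proof clarify
    fix \<sigma> assume "\<sigma> permutes set xs"
    with assms show "map \<sigma> xs \<in> permutations_of_set (set xs)"
      by (intro permutations_of_setI) (simp_all add: distinct_map permutes_inj_on permutes_image)
  qed
  moreover have "card ((\<lambda>\<sigma>. map \<sigma> xs) ` {\<sigma>. \<sigma> permutes set xs}) = card (permutations_of_set (set xs))"
    by (simp add: card_image[OF inj] card_permutations)
  ultimately show ?thesis
    unfolding bij_betw_def by (simp add: card_subset_eq)
qed

lemma num_ascents_map_upt: "num_ascents (map \<sigma> [1..<Suc n]) = card (ascents n \<sigma>)"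
proof -
  have "ascents n \<sigma> = Suc ` {i. Suc i < n \<and> \<sigma> (Suc i) < \<sigma> (Suc (Suc i))}"
    unfolding ascents_def by (subst Collect_nat_split_0_Suc) auto
  moreover have "num_ascents (map \<sigma> [1..<Suc n]) = card {i. Suc i < n \<and> \<sigma> (Suc i) < \<sigma> (Suc (Suc i))}"
    unfolding num_ascents_conv_card by (rule arg_cong[where f = card]) (auto simp del: upt_Suc)
  ultimately show ?thesis by (simp add: card_image)
qed

lemma eulerian_conv_permutations_of_set:
  "eulerian n q = card {xs \<in> permutations_of_set {1..n}. num_ascents xs = q}"
proof -
  have "bij_betw (\<lambda>\<sigma>. map \<sigma> [1..<Suc n]) {\<sigma>. \<sigma> permutes {1..n}} (permutations_of_set {1..n})"
    using bij_betw_map_permutes[of "[1..<Suc n]"] by (simp add: atLeastLessThanSuc_atLeastAtMost del: upt_Suc)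
  then have "bij_betw (\<lambda>\<sigma>. map \<sigma> [1..<Suc n]) {\<sigma> \<in> {\<sigma>. \<sigma> permutes {1..n}}. card (ascents n \<sigma>) = q}
      {xs \<in> permutations_of_set {1..n}. num_ascents xs = q}"
    by (rule bij_betw_Collect) (metis num_ascents_map_upt)
  then show ?thesis
    unfolding eulerian_def by (simp add: bij_betw_same_card)
qed

lemma card_permutations_of_set_Suc_num_ascents:
  "card {ys \<in> permutations_of_set {1..Suc m}. num_ascents ys = q} =
     (\<Sum>xs\<in>permutations_of_set {1..m}. card {k. k \<le> length xs \<and> num_ascents xs + ascent_gain k xs = q})"
proof -
  let ?f = "\<lambda>(xs, k). insert_at k (Suc m) xs"
  let ?P = "permutations_of_set {1..m}"
  have "bij_betw ?f (SIGMA xs:?P. {..length xs}) (permutations_of_set {1..Suc m})"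
    using bij_betw_insert_at_permutations_of_set[of "Suc m" "{1..m}"]
    by (simp add: atLeastAtMostSuc_conv)
  then have "bij_betw ?f {p \<in> (SIGMA xs:?P. {..length xs}). num_ascents (fst p) + ascent_gain (snd p) (fst p) = q}
      {ys \<in> permutations_of_set {1..Suc m}. num_ascents ys = q}"
  proof (rule bij_betw_Collect)
    fix p assume "p \<in> (SIGMA xs:?P. {..length xs})"
    then obtain xs k where p: "p = (xs, k)" "set xs = {1..m}" "k \<le> length xs"
      by (auto dest: permutations_of_setD)
    then have "num_ascents (insert_at k (Suc m) xs) = num_ascents xs + ascent_gain k xs"
      by (intro num_ascents_insert_at_max) auto
    then show "num_ascents (?f p) = q \<longleftrightarrow> num_ascents (fst p) + ascent_gain (snd p) (fst p) = q"
      by (simp add: p)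
  qed
  moreover have "{p \<in> (SIGMA xs:?P. {..length xs}). num_ascents (fst p) + ascent_gain (snd p) (fst p) = q}
      = (SIGMA xs:?P. {k. k \<le> length xs \<and> num_ascents xs + ascent_gain k xs = q})"
    by auto
  ultimately show ?thesis
    by (simp add: bij_betw_same_card[symmetric] card_SigmaI)
qed

lemma eulerian_Suc:
  "eulerian (Suc m) q = (q + 1) * eulerian m q + (if q = 0 then 0 else (m + 1 - q) * eulerian m (q - 1))"
proof -
  let ?P = "permutations_of_set {1..m}"
  have "eulerian (Suc m) q =
      (\<Sum>xs\<in>?P. (if num_ascents xs = q then q + 1 else 0) + (if num_ascents xs + 1 = q then m + 1 - q else 0))"
    unfolding eulerian_conv_permutations_of_set card_permutations_of_set_Suc_num_ascents
  proof (intro sum.cong refl)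
    fix xs assume "xs \<in> ?P"
    then have "length xs = m"
      by (simp add: length_finite_permutations_of_set)
    then show "card {k. k \<le> length xs \<and> num_ascents xs + ascent_gain k xs = q} =
        (if num_ascents xs = q then q + 1 else 0) + (if num_ascents xs + 1 = q then m + 1 - q else 0)"
      using card_insertion_slots[of xs q] by simp
  qed
  also have "\<dots> = (q + 1) * card {xs \<in> ?P. num_ascents xs = q} +
      (m + 1 - q) * card {xs \<in> ?P. num_ascents xs + 1 = q}"
    by (simp add: sum.distrib flip: sum.inter_filter)
  also have "{xs \<in> ?P. num_ascents xs + 1 = q} = (if q = 0 then {} else {xs \<in> ?P. num_ascents xs = q - 1})"
    by auto
  finally show ?thesis
    by (simp add: eulerian_conv_permutations_of_set)
qed

lemma eulerian_0: "eulerian 0 q = (if q = 0 then 1 else 0)"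
proof -
  have "permutations_of_set {1..0::nat} = {[]}"
    by simp
  then have "{xs \<in> permutations_of_set {1..0::nat}. num_ascents xs = q} = (if q = 0 then {[]} else {})"
    by auto
  then show ?thesis
    by (simp add: eulerian_conv_permutations_of_set)
qed

lemma eulerian_eq_0: "n < q \<Longrightarrow> eulerian n q = 0"
proof -
  assume "n < q"
  have "card (ascents n \<sigma>) \<le> card {1..<n}" for \<sigma>
    by (rule card_mono) (auto simp: ascents_def)
  with \<open>n < q\<close> have "card (ascents n \<sigma>) \<noteq> q" for \<sigma>
    by (metis card_atLeastLessThan diff_le_self le_trans leD)
  then show ?thesis
    by (simp add: eulerian_def)
qed

lemma Suc_times_binomial_Suc_eq: "(k + 1) * (n choose (k + 1)) = (n - k) * (n choose k)"
  using binomial_absorption[of k n] binomial_absorb_comp[of n k] by simp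

lemma worpitzky_binomial_identity:
  assumes "j \<le> m"
  shows "(j + 1) * ((m + r + 1) choose (m + 1)) + (m - j) * ((m + r) choose (m + 1))
       = (j + r + 1) * ((m + r) choose m)"
proof -
  define a where "a = (m + r) choose m"
  define b where "b = (m + r) choose (m + 1)"
  have pascal: "(m + r + 1) choose (m + 1) = a + b"
    by (simp add: a_def b_def)
  have absorb: "(m + 1) * b = r * a"
    unfolding a_def b_def using Suc_times_binomial_Suc_eq[of m "m + r"] by simp
  have "(j + 1) * (a + b) + (m - j) * b = (j + 1) * a + ((j + 1) + (m - j)) * b"
    by (simp add: algebra_simps)
  also have "(j + 1) + (m - j) = m + 1"
    using assms by simp
  also have "(j + 1) * a + (m + 1) * b = (j + r + 1) * a"
    using absorb by (simp add: algebra_simps)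
  finally show ?thesis
    by (simp add: pascal a_def b_def)
qed

lemma sum_eulerian_Suc_times_binomial:
  "(\<Sum>j\<le>q. eulerian (Suc m) j * ((q + Suc m - j) choose Suc m)) =
   (\<Sum>j\<le>q. (j + 1) * eulerian m j * ((q + m + 1 - j) choose (m + 1)) +
            (m - j) * eulerian m j * ((q + m - j) choose (m + 1)))"
proof -
  define d where "d i = (m - i) * eulerian m i * ((q + m - i) choose (m + 1))" for i
  have "(\<Sum>j\<le>q. eulerian (Suc m) j * ((q + Suc m - j) choose Suc m))
      = (\<Sum>j\<le>q. (j + 1) * eulerian m j * ((q + m + 1 - j) choose (m + 1)) + (if j = 0 then 0 else d (j - 1)))"
  proof (intro sum.cong refl)
    fix j assume "j \<in> {..q}"
    then have "j \<noteq> 0 \<Longrightarrow> (m + 1 - j) * eulerian m (j - 1) * ((q + m + 1 - j) choose (m + 1)) = d (j - 1)"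
      by (simp add: d_def Suc_diff_le)
    then show "eulerian (Suc m) j * ((q + Suc m - j) choose Suc m) =
        (j + 1) * eulerian m j * ((q + m + 1 - j) choose (m + 1)) + (if j = 0 then 0 else d (j - 1))"
      by (auto simp: eulerian_Suc algebra_simps)
  qed
  moreover have "(\<Sum>j\<le>q. if j = 0 then 0 else d (j - 1)) = (\<Sum>i\<le>q. d i)"
  proof (cases q)
    case 0
    then show ?thesis by (simp add: d_def)
  next
    case (Suc p)
    have "(\<Sum>j\<le>Suc p. if j = 0 then 0 else d (j - 1)) = (\<Sum>i\<le>p. d i)"
      by (simp only: sum.atMost_Suc_shift) simp
    moreover have "d q = 0"
      by (simp add: d_def)
    ultimately show ?thesis
      by (simp add: Suc)
  qed
  ultimately show ?thesis
    by (simp add: sum.distrib d_def)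
qed

theorem worpitzky: "(\<Sum>j\<le>q. eulerian n j * ((q + n - j) choose n)) = (q + 1) ^ n"
proof (induction n arbitrary: q)
  case 0
  have "(\<Sum>j\<le>q. eulerian 0 j * ((q - j) choose 0)) = (\<Sum>j\<le>q. if j = 0 then 1 else 0)"
    by (intro sum.cong refl) (simp add: eulerian_0)
  then show ?case
    by simp
next
  case (Suc m)
  have "(\<Sum>j\<le>q. eulerian (Suc m) j * ((q + Suc m - j) choose Suc m))
      = (\<Sum>j\<le>q. (q + 1) * (eulerian m j * ((q + m - j) choose m)))"
    unfolding sum_eulerian_Suc_times_binomial
  proof (intro sum.cong refl)
    fix j assume "j \<in> {..q}"
    show "(j + 1) * eulerian m j * ((q + m + 1 - j) choose (m + 1)) +
        (m - j) * eulerian m j * ((q + m - j) choose (m + 1)) =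
        (q + 1) * (eulerian m j * ((q + m - j) choose m))"
    proof (cases "j \<le> m")
      case True
      from \<open>j \<in> {..q}\<close> have eqs: "m + (q - j) = q + m - j" "j + (q - j) + 1 = q + 1"
          "q + m + 1 - j = q + m - j + 1"
        by auto
      from arg_cong[where f = "\<lambda>t. eulerian m j * t",
          OF worpitzky_binomial_identity[OF True, of "q - j", unfolded eqs(1,2)]]
      show ?thesis
        unfolding eqs(3) by (simp add: algebra_simps)
    next
      case False
      then show ?thesis
        by (simp add: eulerian_eq_0)
    qed
  qed
  also have "\<dots> = (q + 1) * (\<Sum>j\<le>q. eulerian m j * ((q + m - j) choose m))"
    by (rule sum_distrib_left[symmetric])
  also have "\<dots> = (q + 1) ^ Suc m"
    using Suc.IH[of q] by simp
  finally show ?case .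
qed

lemma eulerian_le_Suc_power: "eulerian n q \<le> (q + 1) ^ n"
proof -
  have "eulerian n q * ((q + n - q) choose n) \<le> (\<Sum>j\<le>q. eulerian n j * ((q + n - j) choose n))"
    by (rule member_le_sum) auto
  then show ?thesis
    by (simp add: worpitzky)
qed

lemma binomial_Suc_le: "k \<le> m \<Longrightarrow> Suc m choose k \<le> (k + 1) * (m choose k)"
proof (cases k)
  case (Suc i)
  assume "k \<le> m"
  have "(i + 1) * (m choose (i + 1)) = (m - i) * (m choose i)"
    by (rule Suc_times_binomial_Suc_eq)
  moreover have "1 \<le> m - i"
    using \<open>k \<le> m\<close> Suc by simp
  ultimately have "m choose i \<le> (i + 1) * (m choose (i + 1))"
    by (metis mult_1 mult_le_mono1)
  then show ?thesis
    using Suc by simp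
qed simp

lemma Suc_power_le_eulerian_plus: "(q + 1) ^ n \<le> eulerian n q + (n + 1) * q ^ n"
proof (cases q)
  case 0
  then show ?thesis
    using worpitzky[of n 0] by simp
next
  case (Suc p)
  have "(q + 1) ^ n = (\<Sum>j\<le>p. eulerian n j * ((q + n - j) choose n)) + eulerian n q"
    using worpitzky[of n q] by (simp add: Suc)
  also have "(\<Sum>j\<le>p. eulerian n j * ((q + n - j) choose n)) \<le>
      (\<Sum>j\<le>p. (n + 1) * (eulerian n j * ((p + n - j) choose n)))"
  proof (rule sum_mono)
    fix j assume "j \<in> {..p}"
    then have "q + n - j = Suc (p + n - j)" "n \<le> p + n - j"
      using Suc by auto
    then have "(q + n - j) choose n \<le> (n + 1) * ((p + n - j) choose n)"
      using binomial_Suc_le[of n "p + n - j"] by simp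
    then show "eulerian n j * ((q + n - j) choose n) \<le> (n + 1) * (eulerian n j * ((p + n - j) choose n))"
      by (metis mult.left_commute mult_le_mono2)
  qed
  also have "\<dots> = (n + 1) * (\<Sum>j\<le>p. eulerian n j * ((p + n - j) choose n))"
    by (rule sum_distrib_left[symmetric])
  also have "\<dots> = (n + 1) * q ^ n"
    by (simp add: Suc worpitzky)
  finally show ?thesis
    by simp
qed

lemma Suc_times_exp_times_power_le:
  fixes x :: real
  assumes "0 \<le> x" and "x < real n / (ln (real n + 1) + 1) - 1"
  shows "(real n + 1) * exp 1 * x ^ n \<le> (x + 1) ^ n"
proof (cases "x = 0")
  case True
  have "n \<noteq> 0"
  proof
    assume "n = 0"
    with assms(2) True show False
      by simp
  qed
  with True show ?thesis
    by (simp add: zero_power)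
next
  case False
  with assms(1) have x: "0 < x"
    by simp
  have "0 < ln (real n + 1) + 1"
    using ln_ge_zero[of "real n + 1"] by linarith
  then have "ln (real n + 1) + 1 < n / (x + 1)"
    using assms(2) x by (simp add: field_simps)
  also have "\<dots> \<le> n * ln (1 / x + 1)"
  proof -
    have "1 / (x + 1) \<le> ln (1 / x + 1)"
      using ln_add1_ge[of "1 / x"] x by (simp add: field_simps)
    then show ?thesis
      by (simp add: divide_inverse mult_left_mono flip: inverse_eq_divide)
  qed
  finally have "exp (ln (real n + 1) + 1) \<le> exp (n * ln (1 / x + 1))"
    by simp
  then have "(real n + 1) * exp 1 \<le> (1 / x + 1) ^ n"
    using x by (simp add: exp_add ln_realpow[symmetric] add_pos_pos)
  then have "(real n + 1) * exp 1 * x ^ n \<le> (1 / x + 1) ^ n * x ^ n"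
    using x by (intro mult_right_mono) simp_all
  also have "\<dots> = (x + 1) ^ n"
    using x by (simp add: field_simps flip: power_mult_distrib)
  finally show ?thesis .
qed

theorem mainTheorem19:
  fixes n q :: nat
  assumes "n \<ge> 2"
    and "real q < real n / (ln (real n + 1) + 1) - 1"
  shows "(1 - 1 / exp 1) * (real q + 1) ^ n \<le> real (eulerian n q)
         \<and> real (eulerian n q) \<le> (real q + 1) ^ n"
proof
  show "real (eulerian n q) \<le> (real q + 1) ^ n"
    using of_nat_mono[OF eulerian_le_Suc_power[of n q], where 'a = real] by (simp add: add.commute)
  have "(real q + 1) ^ n \<le> real (eulerian n q) + (real n + 1) * real q ^ n"
    using of_nat_mono[OF Suc_power_le_eulerian_plus[of q n], where 'a = real] by (simp add: algebra_simps)
  moreover have "(real n + 1) * exp 1 * real q ^ n \<le> (real q + 1) ^ n"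
    using assms(2) by (intro Suc_times_exp_times_power_le) simp_all
  then have "(real n + 1) * real q ^ n \<le> (real q + 1) ^ n / exp 1"
    by (simp add: field_simps)
  moreover have "(1 - 1 / exp 1) * (real q + 1) ^ n = (real q + 1) ^ n - (real q + 1) ^ n / exp 1"
    by (simp add: algebra_simps)
  ultimately show "(1 - 1 / exp 1) * (real q + 1) ^ n \<le> real (eulerian n q)"
    by linarith
qed

end
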